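(* Let $G$ be a Lie group, let $\mathcal{X}$ and $\mathcal{Y}$ be linear vector fields on $G$ with flows $(\varphi_t)$ and $(\psi_t)$, and suppose there is an automorphism $\pi:G\to G$ with $\pi(\varphi_t(x))=\psi_t(\pi(x))$ and $\varphi_t(\pi^{-1}(x))=\pi^{-1}(\psi_t(x))$ for all $t\in\mathbb{R}$, $x\in G$. Let $h:G\to G$ be a (continuous) homomorphism, $K=\ker(h)$, $S=\ker(h\circ\pi^{-1})$, and set $I_1=\{x\in G:\varphi_t(x)\in K\ \forall t\in\mathbb{R}\}$, $I_2=\{y\in G:\psi_t(y)\in S\ \forall t\in\mathbb{R}\}$. Then $I_1$ is discrete if and only if $I_2$ is discrete. Moreover, $\mathrm{Fix}(\varphi)\cap K=\{e\}$ if and only if $\mathrm{Fix}(\psi)\cap S=\{e\}$.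
   Context: A vector field on a Lie group $G$ is linear if its flow is a one-parameter subgroup of $\mathrm{Aut}(G)$. $\mathrm{Fix}(\varphi)=\{g\in G:\varphi_t(g)=g\ \forall t\in\mathbb{R}\}$ denotes the set of fixed points of the flow $\varphi$, and $e$ is the identity of $G$. *)

theory Defs
  imports "HOL-Analysis.Analysis" "HOL-Algebra.Coset"
begin

text \<open>A topological group: an HOL-Algebra group G together with a topology T on
  its carrier for which multiplication and inversion are continuous.
  (Stand-in for a Lie group; smooth structure is not available in the library.)\<close>
definition topological_group :: "('a, 'm) monoid_scheme \<Rightarrow> 'a topology \<Rightarrow> bool" where
  "topological_group G T \<longleftrightarrow> group G \<and> topspace T = carrier G \<and>
     continuous_map (prod_topology T T) T (\<lambda>(x, y). x \<otimes>\<^bsub>G\<^esub> y) \<and>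
     continuous_map T T (\<lambda>x. inv\<^bsub>G\<^esub> x)"

definition top_aut :: "('a, 'm) monoid_scheme \<Rightarrow> 'a topology \<Rightarrow> ('a \<Rightarrow> 'a) \<Rightarrow> bool" where
  "top_aut G T f \<longleftrightarrow> f \<in> iso G G \<and> homeomorphic_map T T f"

text \<open>Flow of a linear vector field: a (jointly continuous) one-parameter subgroup
  t \<mapsto> phi t of Aut(G).\<close>
definition linear_flow :: "('a, 'm) monoid_scheme \<Rightarrow> 'a topology \<Rightarrow> (real \<Rightarrow> 'a \<Rightarrow> 'a) \<Rightarrow> bool" where
  "linear_flow G T \<phi> \<longleftrightarrow>
     (\<forall>t. top_aut G T (\<phi> t)) \<and>
     (\<forall>x \<in> carrier G. \<phi> 0 x = x) \<and>
     (\<forall>s t. \<forall>x \<in> carrier G. \<phi> (s + t) x = \<phi> s (\<phi> t x)) \<and>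
     continuous_map (prod_topology euclideanreal T) T (\<lambda>(t, x). \<phi> t x)"

definition Fix :: "('a, 'm) monoid_scheme \<Rightarrow> (real \<Rightarrow> 'a \<Rightarrow> 'a) \<Rightarrow> 'a set" where
  "Fix G \<phi> = {g \<in> carrier G. \<forall>t. \<phi> t g = g}"

definition discrete_in :: "'a topology \<Rightarrow> 'a set \<Rightarrow> bool" where
  "discrete_in T A \<longleftrightarrow> subtopology T A = discrete_topology A"

end

theory Submission
  imports Defs
begin

text \<open>The automorphism \<open>\<pi>\<close> conjugates \<open>\<phi>\<close> to \<open>\<psi>\<close> and carries \<open>K\<close> onto \<open>S\<close>, so it maps
  \<open>I\<^sub>1\<close> onto \<open>I\<^sub>2\<close> and \<open>Fix(\<phi>) \<inter> K\<close> onto \<open>Fix(\<psi>) \<inter> S\<close>. As a homeomorphism it preserves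
  discreteness, and as an injective map fixing \<open>e\<close> it preserves being \<open>{e}\<close>.\<close>

lemma discrete_in_iff_openin_singletons:
  assumes "A \<subseteq> topspace T"
  shows "discrete_in T A \<longleftrightarrow> (\<forall>x \<in> A. openin (subtopology T A) {x})"
  using assms discrete_topology_unique[of A "subtopology T A"]
  by (auto simp: discrete_in_def Int_absorb1)

lemma discrete_in_homeomorphic_image:
  assumes f: "homeomorphic_map T T f" and A: "A \<subseteq> topspace T"
  shows "discrete_in T (f ` A) \<longleftrightarrow> discrete_in T A"
proof -
  have fA: "f ` A \<subseteq> topspace T"
    using f A by (auto simp: homeomorphic_eq_everything_map)
  have "homeomorphic_map (subtopology T A) (subtopology T (f ` A)) f"
    using homeomorphic_map_subtopologies[OF f, of A] A fA by (simp add: Int_absorb1)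
  then have "openin (subtopology T (f ` A)) {f x} \<longleftrightarrow> openin (subtopology T A) {x}" if "x \<in> A" for x
    using homeomorphic_map_openness[of "subtopology T A" _ f "{x}"] that A by auto
  then show ?thesis
    using A fA by (simp add: discrete_in_iff_openin_singletons)
qed

lemma linear_flow_closed:
  assumes "linear_flow G T \<phi>" and "x \<in> carrier G"
  shows "\<phi> t x \<in> carrier G"
  using assms by (auto simp: linear_flow_def top_aut_def iso_def hom_def)

lemma kernel_comp_inv_into:
  assumes "bij_betw \<pi> (carrier G) (carrier G)"
  shows "kernel G H (h \<circ> inv_into (carrier G) \<pi>) = \<pi> ` kernel G H h"
  using assms by (force simp: kernel_def bij_betw_def inv_into_into)

lemma image_points_with_orbit_in:
  assumes \<pi>: "bij_betw \<pi> A A" and K: "K \<subseteq> A"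
    and \<phi>: "\<And>t x. x \<in> A \<Longrightarrow> \<phi> t x \<in> A"
    and conj: "\<And>t x. x \<in> A \<Longrightarrow> \<pi> (\<phi> t x) = \<psi> t (\<pi> x)"
  shows "\<pi> ` {x \<in> A. \<forall>t. \<phi> t x \<in> K} = {y \<in> A. \<forall>t. \<psi> t y \<in> \<pi> ` K}"
proof -
  have "\<phi> t x \<in> K \<longleftrightarrow> \<psi> t (\<pi> x) \<in> \<pi> ` K" if "x \<in> A" for t x
    using inj_on_image_mem_iff[of \<pi> A "\<phi> t x" K] that \<phi> K \<pi> conj
    by (simp add: bij_betw_def)
  then have "\<pi> ` {x \<in> A. \<forall>t. \<phi> t x \<in> K} = \<pi> ` {x \<in> A. \<forall>t. \<psi> t (\<pi> x) \<in> \<pi> ` K}"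
    by auto
  also have "\<dots> = {y \<in> A. \<forall>t. \<psi> t y \<in> \<pi> ` K}"
    using \<pi> by (auto simp: bij_betw_def)
  finally show ?thesis .
qed

lemma image_Fix:
  assumes \<pi>: "bij_betw \<pi> (carrier G) (carrier G)"
    and \<phi>: "\<And>t x. x \<in> carrier G \<Longrightarrow> \<phi> t x \<in> carrier G"
    and conj: "\<And>t x. x \<in> carrier G \<Longrightarrow> \<pi> (\<phi> t x) = \<psi> t (\<pi> x)"
  shows "\<pi> ` Fix G \<phi> = Fix G \<psi>"
proof -
  have "\<phi> t x = x \<longleftrightarrow> \<psi> t (\<pi> x) = \<pi> x" if "x \<in> carrier G" for t x
    using inj_on_eq_iff[of \<pi> "carrier G" "\<phi> t x" x] that \<phi> \<pi> conj
    by (simp add: bij_betw_def)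
  then have "\<pi> ` Fix G \<phi> = \<pi> ` {x \<in> carrier G. \<forall>t. \<psi> t (\<pi> x) = \<pi> x}"
    by (auto simp: Fix_def)
  also have "\<dots> = Fix G \<psi>"
    using \<pi> by (auto simp: Fix_def bij_betw_def)
  finally show ?thesis .
qed

theorem corollary2p7:
  fixes G :: "('a, 'm) monoid_scheme" and T :: "'a topology"
    and \<phi> \<psi> :: "real \<Rightarrow> 'a \<Rightarrow> 'a" and \<pi> h :: "'a \<Rightarrow> 'a"
  assumes "topological_group G T"
    and "linear_flow G T \<phi>" and "linear_flow G T \<psi>"
    and "top_aut G T \<pi>"
    and "\<And>t x. x \<in> carrier G \<Longrightarrow> \<pi> (\<phi> t x) = \<psi> t (\<pi> x)"
    and "\<And>t x. x \<in> carrier G \<Longrightarrow>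
           \<phi> t (inv_into (carrier G) \<pi> x) = inv_into (carrier G) \<pi> (\<psi> t x)"
    and "h \<in> hom G G" and "continuous_map T T h"
  shows "(discrete_in T {x \<in> carrier G. \<forall>t. \<phi> t x \<in> kernel G G h}
            \<longleftrightarrow> discrete_in T {y \<in> carrier G. \<forall>t. \<psi> t y \<in> kernel G G (h \<circ> inv_into (carrier G) \<pi>)})
       \<and> (Fix G \<phi> \<inter> kernel G G h = {\<one>\<^bsub>G\<^esub>}
            \<longleftrightarrow> Fix G \<psi> \<inter> kernel G G (h \<circ> inv_into (carrier G) \<pi>) = {\<one>\<^bsub>G\<^esub>})"
proof -
  let ?K = "kernel G G h" and ?S = "kernel G G (h \<circ> inv_into (carrier G) \<pi>)"
  have grp: "group G" and top: "topspace T = carrier G"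
    using assms(1) by (auto simp: topological_group_def)
  have iso: "\<pi> \<in> iso G G" and homeo: "homeomorphic_map T T \<pi>"
    using assms(4) by (auto simp: top_aut_def)
  then have bij: "bij_betw \<pi> (carrier G) (carrier G)"
    by (simp add: iso_def)
  then have inj: "inj_on \<pi> (carrier G)"
    by (simp add: bij_betw_def)
  have S: "?S = \<pi> ` ?K"
    by (rule kernel_comp_inv_into[OF bij])
  have K_sub: "?K \<subseteq> carrier G" and Fix_sub: "Fix G \<phi> \<subseteq> carrier G"
    by (auto simp: kernel_def Fix_def)
  note \<phi>_closed = linear_flow_closed[OF assms(2)]
  have I: "{y \<in> carrier G. \<forall>t. \<psi> t y \<in> ?S} = \<pi> ` {x \<in> carrier G. \<forall>t. \<phi> t x \<in> ?K}"
    unfolding S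
    by (rule image_points_with_orbit_in[where \<psi> = \<psi>, OF bij K_sub \<phi>_closed assms(5), symmetric])
  have F: "Fix G \<psi> \<inter> ?S = \<pi> ` (Fix G \<phi> \<inter> ?K)"
    by (simp only: S inj_on_image_Int[OF inj Fix_sub K_sub]
        image_Fix[where \<psi> = \<psi>, OF bij \<phi>_closed assms(5)])
  have one: "\<pi> \<one>\<^bsub>G\<^esub> = \<one>\<^bsub>G\<^esub>" and one_closed: "\<one>\<^bsub>G\<^esub> \<in> carrier G"
    using iso grp by (simp_all add: hom_one iso_def group.is_monoid)
  have discrete_iff: "discrete_in T {x \<in> carrier G. \<forall>t. \<phi> t x \<in> ?K}
      \<longleftrightarrow> discrete_in T {y \<in> carrier G. \<forall>t. \<psi> t y \<in> ?S}"
    unfolding I by (rule discrete_in_homeomorphic_image[OF homeo, symmetric]) (auto simp: top)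
  have "Fix G \<phi> \<inter> ?K = {\<one>\<^bsub>G\<^esub>} \<longleftrightarrow> \<pi> ` (Fix G \<phi> \<inter> ?K) = \<pi> ` {\<one>\<^bsub>G\<^esub>}"
    by (rule inj_on_image_eq_iff[OF inj, symmetric]) (use Fix_sub one_closed in auto)
  then have Fix_iff: "Fix G \<phi> \<inter> ?K = {\<one>\<^bsub>G\<^esub>} \<longleftrightarrow> Fix G \<psi> \<inter> ?S = {\<one>\<^bsub>G\<^esub>}"
    by (simp only: F one image_insert image_empty)
  show ?thesis
    using discrete_iff Fix_iff ..
qed

end
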